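(* Under the model below, suppose in addition that all packets are transmitted by MPGPS in increasing order of their GPS departure times (i.e. no packet arrives too late to be served in that order). Then for every batch $h$ and every packet index $k$ in that batch, $$\hat d_h^k - d_h^k \le \frac{(M-1)L}{Nr}.$$
   Context: Model. There are $K$ users (sessions) with separate FIFO queues, and $N$ servers (subcarriers), each transmitting $r$ bits per unit time, so the total service rate is $Nr$. All packets have the same length $L$ bits. Transmissions are error free. The same packet arrival sequence is fed to two systems. GPS (generalized processor sharing): a fluid system of total rate $Nr$; each user $k$ has a weight $\phi_k>0$, and at every instant each backlogged user $k$ is served at rate $Nr\,\phi_k/\sum_{j\in B}\phi_j$, where $B$ is the set of currently backlogged users. A packet's GPS departure time is the time its last bit is served in GPS. MPGPS (multi-server packetized GPS) with parameter $M\ge 1$: it is work conserving (servers are never idle while packets are queued). Whenever the servers become idle at a time $\tau$, among all packets queued at $\tau$ it selects the $\min\big(M,\sum_{k}\hat Q_k(\tau)\big)$ packets that would be the first to complete service in the corresponding GPS system if no further packets arrived after $\tau$ ($\hat Q_k(\tau)$ is the number of user-$k$ packets queued under MPGPS at $\tau$). These selected packets form one batch; a batch of $M_h$ packets is transmitted jointly over all $N$ servers, occupies the servers for $M_hL/(Nr)$ time units, and all its packets depart at the end of that period. Batches are indexed $h=1,2,\dots$; $f_h^k$ denotes the $k$-th packet of batch $h$, $\hat d_h^k$ its departure time under MPGPS, and $d_h^k$ its departure time under GPS. *)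

theory Defs
  imports Complex_Main
begin

text \<open>Users are indexed by k < K. User k has n k packets, its i-th packet (i < n k, FIFO
order) arrives at time a k i. All packets have length L bits. Time starts at 0.\<close>

definition packets :: "nat \<Rightarrow> (nat \<Rightarrow> nat) \<Rightarrow> (nat \<times> nat) set" where
  "packets K n = {(k, i). k < K \<and> i < n k}"

definition cum_arr :: "real \<Rightarrow> (nat \<Rightarrow> nat) \<Rightarrow> (nat \<Rightarrow> nat \<Rightarrow> real) \<Rightarrow> nat \<Rightarrow> real \<Rightarrow> real" where
  "cum_arr L n a k t = L * real (card {i. i < n k \<and> a k i \<le> t})"

text \<open>Backlogged users at time t under the fluid service trajectory S (S k t = bits of
user k served by time t).\<close>
definition backlogged ::
  "nat \<Rightarrow> real \<Rightarrow> (nat \<Rightarrow> nat) \<Rightarrow> (nat \<Rightarrow> nat \<Rightarrow> real) \<Rightarrow> (nat \<Rightarrow> real \<Rightarrow> real) \<Rightarrow> real \<Rightarrow> nat set" where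
  "backlogged K L n a S t = {j. j < K \<and> S j t < cum_arr L n a j t}"

definition gps_rate :: "(nat \<Rightarrow> real) \<Rightarrow> real \<Rightarrow> nat set \<Rightarrow> nat \<Rightarrow> real" where
  "gps_rate phi R B k = (if k \<in> B then R * phi k / (\<Sum>j\<in>B. phi j) else 0)"

definition is_gps ::
  "nat \<Rightarrow> (nat \<Rightarrow> real) \<Rightarrow> real \<Rightarrow> real \<Rightarrow> (nat \<Rightarrow> nat) \<Rightarrow> (nat \<Rightarrow> nat \<Rightarrow> real)
   \<Rightarrow> (nat \<Rightarrow> real \<Rightarrow> real) \<Rightarrow> bool" where
  "is_gps K phi R L n a S \<longleftrightarrow>
     (\<forall>k<K. S k 0 = 0 \<and> continuous_on {0..} (S k) \<and>
        (\<forall>t\<ge>0. S k t \<le> cum_arr L n a k t \<and>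
           (S k has_real_derivative gps_rate phi R (backlogged K L n a S t) k) (at_right t)))"

definition gps_dep :: "(nat \<Rightarrow> real \<Rightarrow> real) \<Rightarrow> real \<Rightarrow> nat \<Rightarrow> nat \<Rightarrow> real" where
  "gps_dep S L k i = Inf {t. 0 \<le> t \<and> real (Suc i) * L \<le> S k t}"

definition trunc :: "(nat \<Rightarrow> nat \<Rightarrow> real) \<Rightarrow> (nat \<Rightarrow> nat) \<Rightarrow> real \<Rightarrow> nat \<Rightarrow> nat" where
  "trunc a n tau = (\<lambda>k. card {i. i < n k \<and> a k i \<le> tau})"

text \<open>MPGPS schedule: batches h = 1..H, batch h is the set of packets (k,i) in it and
starts at time tau h. gps maps an arrival count function to the GPS trajectory
(with the fixed arrival times a); it is used for the virtual GPS system in which no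
packet arrives after tau h.\<close>
definition mpgps_dep :: "nat \<Rightarrow> real \<Rightarrow> real \<Rightarrow> (nat \<Rightarrow> (nat \<times> nat) set) \<Rightarrow> (nat \<Rightarrow> real) \<Rightarrow> nat \<Rightarrow> real" where
  "mpgps_dep N r L batch tau h = tau h + real (card (batch h)) * L / (real N * r)"

definition is_mpgps ::
  "nat \<Rightarrow> nat \<Rightarrow> nat \<Rightarrow> real \<Rightarrow> real \<Rightarrow> (nat \<Rightarrow> nat) \<Rightarrow> (nat \<Rightarrow> nat \<Rightarrow> real)
   \<Rightarrow> ((nat \<Rightarrow> nat) \<Rightarrow> nat \<Rightarrow> real \<Rightarrow> real) \<Rightarrow> nat \<Rightarrow> (nat \<Rightarrow> (nat \<times> nat) set) \<Rightarrow> (nat \<Rightarrow> real) \<Rightarrow> bool" where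
  "is_mpgps K M N r L n a gps H batch tau \<longleftrightarrow>
     (let P = packets K n;
          arr = (\<lambda>(k, i). a k i);
          served = (\<lambda>h. \<Union> (batch ` {1..<h}));
          Q = (\<lambda>h. {p \<in> P. arr p \<le> tau h} - served h);
          vdep = (\<lambda>h (k, i). gps_dep (gps (trunc a n (tau h))) L k i)
      in (\<Union> (batch ` {1..H})) = P
       \<and> (\<forall>h\<in>{1..H}. \<forall>h'\<in>{1..H}. h \<noteq> h' \<longrightarrow> batch h \<inter> batch h' = {})
       \<and> (P \<noteq> {} \<longrightarrow> tau 1 = Min (arr ` P))
       \<and> (\<forall>h\<in>{1..H}. batch h \<noteq> {} \<and> batch h \<subseteq> Q h \<and> card (batch h) = min M (card (Q h)))
       \<and> (\<forall>h\<in>{1..H}. \<forall>p\<in>batch h. \<forall>q\<in>Q h - batch h. vdep h p \<le> vdep h q)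
       \<and> (\<forall>h\<in>{1..<H}. tau (Suc h) =
             max (mpgps_dep N r L batch tau h) (Min (arr ` (P - served (Suc h))))))"

end

theory Submission
  imports Defs "HOL-Analysis.Analysis"
begin

text \<open>Let g0 be the first batch of the MPGPS busy period that ends with batch h: the servers never
  idle between tau g0 and the departure of batch h, and every packet of batches g0, ..., h
  arrived no earlier than tau g0, so batch h departs at tau g0 + (their total size) / (N r).
  By the ordering hypothesis, the packets of batches g0, ..., h - 1 together with the packet
  (k, i) all leave GPS by its GPS departure time d; GPS serves them entirely within
  [tau g0, d] at total rate at most N r, so d \<ge> tau g0 + (their total size) / (N r).
  The two sizes differ by the other packets of batch h, at most (M - 1) L.\<close>

section \<open>Mean value inequalities for right derivatives\<close>

lemma right_derivative_neg_imp_le: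
  fixes g g' :: "real \<Rightarrow> real"
  assumes ab: "a \<le> b" and cont: "continuous_on {a..b} g"
    and der: "\<And>t. a \<le> t \<Longrightarrow> t < b \<Longrightarrow> (g has_real_derivative g' t) (at_right t)"
    and neg: "\<And>t. a \<le> t \<Longrightarrow> t < b \<Longrightarrow> g' t < 0"
  shows "g b \<le> g a"
proof -
  define A where "A = {t \<in> {a..b}. \<forall>u\<in>{a..t}. g u \<le> g a}"
  define s where "s = Sup A"
  have aA: "a \<in> A" using ab by (simp add: A_def)
  have bdd: "bdd_above A" unfolding A_def by (rule bdd_aboveI[of _ b]) auto
  have as: "a \<le> s" unfolding s_def using aA bdd by (rule cSup_upper)
  have sb: "s \<le> b" unfolding s_def using aA by (intro cSup_least) (auto simp: A_def)
  have "closed ({a..b} \<inter> g -` {..g a})"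
    by (rule continuous_closed_preimage[OF cont]) auto
  moreover have "A \<subseteq> {a..b} \<inter> g -` {..g a}" by (auto simp: A_def)
  ultimately have "closure A \<subseteq> {a..b} \<inter> g -` {..g a}" by (rule closure_minimal[rotated])
  moreover have "s \<in> closure A" unfolding s_def using aA bdd by (intro closure_contains_Sup) auto
  ultimately have gs: "g s \<le> g a" by auto
  have sA: "s \<in> A"
  proof -
    have "g u \<le> g a" if "u \<in> {a..s}" for u
    proof (cases "u < s")
      case True
      then obtain t where "t \<in> A" "u < t" using aA bdd less_cSupD[of A u] unfolding s_def by blast
      then show ?thesis using that by (auto simp: A_def)
    qed (use that gs in auto)
    then show ?thesis using as sb by (auto simp: A_def)
  qed
  have "s = b"
  proof (rule ccontr)
    assume "s \<noteq> b"
    with sb have "s < b" by simp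
    from der[OF as this] have "((\<lambda>y. (g y - g s) / (y - s)) \<longlongrightarrow> g' s) (at_right s)"
      by (simp add: has_field_derivative_iff)
    from order_tendstoD(2)[OF this neg[OF as \<open>s < b\<close>]]
    obtain c where c: "c > s" "\<And>y. s < y \<Longrightarrow> y < c \<Longrightarrow> (g y - g s) / (y - s) < 0"
      unfolding eventually_at_right_field by blast
    define t where "t = (s + min c b) / 2"
    have ts: "s < t" "t < c" "t \<le> b" using c(1) \<open>s < b\<close> by (auto simp: t_def)
    have "g u \<le> g a" if "u \<in> {a..t}" for u
    proof (cases "u \<le> s")
      case True
      then show ?thesis using sA that by (auto simp: A_def)
    next
      case False
      then have "g u < g s" using c(2)[of u] that ts by (simp add: divide_less_0_iff)
      then show ?thesis using gs by simp
    qed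
    then have "t \<in> A" using ts as by (auto simp: A_def)
    then have "t \<le> s" unfolding s_def using bdd by (rule cSup_upper)
    then show False using ts by simp
  qed
  then show ?thesis using sA by (auto simp: A_def)
qed

lemma right_derivative_le_imp_increment_le:
  fixes f f' :: "real \<Rightarrow> real"
  assumes ab: "a \<le> b" and cont: "continuous_on {a..b} f"
    and der: "\<And>t. a \<le> t \<Longrightarrow> t < b \<Longrightarrow> (f has_real_derivative f' t) (at_right t)"
    and bound: "\<And>t. a \<le> t \<Longrightarrow> t < b \<Longrightarrow> f' t \<le> C"
  shows "f b - f a \<le> C * (b - a)"
proof -
  have slack: "f b - f a \<le> (C + e) * (b - a)" if "e > 0" for e
  proof -
    let ?g = "\<lambda>t. f t - (C + e) * t"
    have "?g b \<le> ?g a"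
    proof (rule right_derivative_neg_imp_le[OF ab])
      show "continuous_on {a..b} ?g" by (intro continuous_intros cont)
      show "(?g has_real_derivative f' t - (C + e)) (at_right t)" if "a \<le> t" "t < b" for t
        by (auto intro!: derivative_eq_intros der that)
      show "f' t - (C + e) < 0" if "a \<le> t" "t < b" for t
        using bound[OF that] \<open>e > 0\<close> by simp
    qed
    then show ?thesis by (simp add: algebra_simps)
  qed
  show ?thesis
  proof (cases "a = b")
    case False
    with ab have "b - a > 0" by simp
    show ?thesis
    proof (rule field_le_epsilon)
      fix e :: real assume "e > 0"
      have "(C + e / (b - a)) * (b - a) = C * (b - a) + e" using \<open>b - a > 0\<close> by (simp add: field_simps)
      with slack[of "e / (b - a)"] \<open>b - a > 0\<close> \<open>e > 0\<close> show "f b - f a \<le> C * (b - a) + e" by simp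
    qed
  qed simp
qed

lemma right_derivative_ge_imp_increment_ge:
  fixes f f' :: "real \<Rightarrow> real"
  assumes "a \<le> b" and "continuous_on {a..b} f"
    and "\<And>t. a \<le> t \<Longrightarrow> t < b \<Longrightarrow> (f has_real_derivative f' t) (at_right t)"
    and "\<And>t. a \<le> t \<Longrightarrow> t < b \<Longrightarrow> C \<le> f' t"
  shows "C * (b - a) \<le> f b - f a"
proof -
  have "(- f b) - (- f a) \<le> (- C) * (b - a)"
    by (rule right_derivative_le_imp_increment_le[where f'="\<lambda>t. - f' t"])
       (use assms in \<open>auto intro!: derivative_eq_intros continuous_intros\<close>)
  then show ?thesis by simp
qed

lemma card_Diff_Diff_singleton:
  assumes "finite A" and "B \<subseteq> A" and "x \<in> B"
  shows "card (A - (B - {x})) + card B = card A + 1"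
proof -
  have "finite B" using assms(1,2) finite_subset by blast
  then have "card (A - (B - {x})) = card A - card (B - {x})"
    using assms by (intro card_Diff_subset) auto
  moreover have "card (B - {x}) + 1 = card B"
    using \<open>finite B\<close> assms(3) card_gt_0_iff[of B] by (auto simp: card_Diff_singleton)
  moreover have "card B \<le> card A" using assms(1,2) by (rule card_mono)
  ultimately show ?thesis by linarith
qed

lemma card_arrived_before_le:
  fixes a :: "nat \<Rightarrow> nat \<Rightarrow> 'a::order"
  assumes mono: "\<And>m m'. m \<le> m' \<Longrightarrow> m' < n j \<Longrightarrow> a j m \<le> a j m'"
    and "t \<le> a j m"
  shows "card {m'. m' < n j \<and> a j m' < t} \<le> m"
proof -
  have "{m'. m' < n j \<and> a j m' < t} \<subseteq> {..<m}"
  proof safe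
    fix m' assume "m' < n j" "a j m' < t"
    show "m' < m"
    proof (rule ccontr)
      assume "\<not> m' < m"
      then have "a j m \<le> a j m'" using mono \<open>m' < n j\<close> by simp
      with \<open>a j m' < t\<close> \<open>t \<le> a j m\<close> show False by simp
    qed
  qed
  then show ?thesis by (metis card_lessThan card_mono finite_lessThan)
qed

section \<open>The GPS fluid system\<close>

lemma gps_rate_nonneg:
  assumes "finite B" and "\<forall>j\<in>B. 0 < phi j" and "0 \<le> R"
  shows "0 \<le> gps_rate phi R B j"
proof (cases "j \<in> B")
  case True
  with assms have "0 < sum phi B" by (intro sum_pos) auto
  with True assms show ?thesis by (simp add: gps_rate_def less_imp_le)
qed (simp add: gps_rate_def)

lemma gps_rate_sum_le:
  assumes "finite B" and "\<forall>j\<in>B. 0 < phi j" and "0 \<le> R"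
  shows "(\<Sum>j\<in>U. gps_rate phi R B j) \<le> R"
proof (cases "finite U \<and> B \<noteq> {}")
  case True
  then have pos: "0 < sum phi B" using assms by (intro sum_pos) auto
  have "(\<Sum>j\<in>U. gps_rate phi R B j) = R * sum phi (U \<inter> B) / sum phi B"
    using True by (simp add: gps_rate_def sum.If_cases Int_def sum_divide_distrib sum_distrib_left)
  also have "sum phi (U \<inter> B) \<le> sum phi B"
    using assms by (intro sum_mono2) auto
  then have "R * sum phi (U \<inter> B) / sum phi B \<le> R"
    using pos assms(3) by (simp add: divide_le_eq mult_left_mono)
  finally show ?thesis .
qed (use assms in \<open>auto simp: gps_rate_def\<close>)

lemma gps_rate_ge:
  assumes "finite A" and "B \<subseteq> A" and "\<forall>j\<in>A. 0 < phi j" and "0 \<le> R" and "j \<in> B"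
  shows "R * phi j / sum phi A \<le> gps_rate phi R B j"
proof -
  have "0 < sum phi B" using assms by (intro sum_pos) (auto intro: finite_subset)
  moreover have "sum phi B \<le> sum phi A" using assms by (intro sum_mono2) auto
  ultimately have "R * phi j / sum phi A \<le> R * phi j / sum phi B"
    using assms by (intro divide_left_mono) (auto simp: less_imp_le)
  with \<open>j \<in> B\<close> show ?thesis by (simp add: gps_rate_def)
qed

lemma finite_backlogged: "finite (backlogged K L n a S t)"
  by (rule finite_subset[of _ "{..<K}"]) (auto simp: backlogged_def)

lemma finite_packets: "finite (packets K n)"
  by (rule finite_subset[of _ "(SIGMA k:{..<K}. {..<n k})"]) (auto simp: packets_def)

locale gps_system =
  fixes K :: nat and phi :: "nat \<Rightarrow> real" and R L :: real
    and n :: "nat \<Rightarrow> nat" and a :: "nat \<Rightarrow> nat \<Rightarrow> real" and S :: "nat \<Rightarrow> real \<Rightarrow> real"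
  assumes gps: "is_gps K phi R L n a S"
    and phi_pos: "\<And>j. j < K \<Longrightarrow> 0 < phi j"
    and R_pos: "0 < R" and L_pos: "0 < L"
    and arrival_nonneg: "\<And>j m. j < K \<Longrightarrow> m < n j \<Longrightarrow> 0 \<le> a j m"
    and arrival_mono: "\<And>j m m'. j < K \<Longrightarrow> m \<le> m' \<Longrightarrow> m' < n j \<Longrightarrow> a j m \<le> a j m'"
begin

abbreviation rate :: "real \<Rightarrow> nat \<Rightarrow> real" where
  "rate t \<equiv> gps_rate phi R (backlogged K L n a S t)"

lemma service_continuous: "j < K \<Longrightarrow> continuous_on {0..} (S j)"
  using gps by (simp add: is_gps_def)

lemma service_has_right_derivative:
  "j < K \<Longrightarrow> 0 \<le> t \<Longrightarrow> (S j has_real_derivative rate t j) (at_right t)"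
  using gps by (simp add: is_gps_def)

lemma service_le_cum_arr: "j < K \<Longrightarrow> 0 \<le> t \<Longrightarrow> S j t \<le> cum_arr L n a j t"
  using gps by (simp add: is_gps_def)

lemma backlogged_phi_pos: "\<forall>j\<in>backlogged K L n a S t. 0 < phi j"
  by (simp add: backlogged_def phi_pos)

lemma rate_nonneg: "0 \<le> rate t j"
  by (intro gps_rate_nonneg finite_backlogged backlogged_phi_pos less_imp_le[OF R_pos])

lemma service_mono:
  assumes "j < K" and "0 \<le> t1" and "t1 \<le> t2"
  shows "S j t1 \<le> S j t2"
proof -
  have "0 * (t2 - t1) \<le> S j t2 - S j t1"
    by (rule right_derivative_ge_imp_increment_ge[where f'="\<lambda>t. rate t j"])
       (use assms in \<open>auto intro: service_has_right_derivative rate_nonneg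
          continuous_on_subset[OF service_continuous]\<close>)
  then show ?thesis by simp
qed

lemma service_nonneg: "j < K \<Longrightarrow> 0 \<le> t \<Longrightarrow> 0 \<le> S j t"
  using service_mono[of j 0 t] gps by (simp add: is_gps_def)

lemma sum_service_increment_le:
  assumes "U \<subseteq> {..<K}" and "0 \<le> t1" and "t1 \<le> t2"
  shows "(\<Sum>j\<in>U. S j t2 - S j t1) \<le> R * (t2 - t1)"
proof -
  have "(\<lambda>t. \<Sum>j\<in>U. S j t) t2 - (\<lambda>t. \<Sum>j\<in>U. S j t) t1 \<le> R * (t2 - t1)"
  proof (rule right_derivative_le_imp_increment_le[where f'="\<lambda>t. \<Sum>j\<in>U. rate t j"])
    show "continuous_on {t1..t2} (\<lambda>t. \<Sum>j\<in>U. S j t)"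
      using assms by (intro continuous_intros continuous_on_subset[OF service_continuous]) auto
    show "((\<lambda>t. \<Sum>j\<in>U. S j t) has_real_derivative (\<Sum>j\<in>U. rate t j)) (at_right t)"
      if "t1 \<le> t" for t
      using assms that by (intro DERIV_sum service_has_right_derivative) auto
    show "(\<Sum>j\<in>U. rate t j) \<le> R" for t
      by (intro gps_rate_sum_le finite_backlogged backlogged_phi_pos less_imp_le[OF R_pos])
  qed (use assms in auto)
  then show ?thesis by (simp add: sum_subtractf)
qed

text \<open>The strict inequality a j m < t (cum_arr counts arrivals at t itself) holds by
  left continuity of S j.\<close>
lemma service_le_arrived_before:
  assumes j: "j < K" and "0 \<le> t"
  shows "S j t \<le> L * card {m. m < n j \<and> a j m < t}"
proof (cases "t = 0")
  case True
  then show ?thesis using gps j L_pos by (simp add: is_gps_def)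
next
  case False
  with \<open>0 \<le> t\<close> have "0 < t" by simp
  define c where "c = card {m. m < n j \<and> a j m < t}"
  define t0 where "t0 = Max (insert 0 (a j ` {m. m < n j \<and> a j m < t}))"
  have t0: "t0 < t" "0 \<le> t0" using \<open>0 < t\<close> by (auto simp: t0_def)
  have below: "S j u \<le> L * c" if "t0 < u" "u < t" for u
  proof -
    have "{m. m < n j \<and> a j m \<le> u} = {m. m < n j \<and> a j m < t}"
      using that by (force simp: t0_def)
    then show ?thesis using service_le_cum_arr[OF j, of u] that t0 by (simp add: cum_arr_def c_def)
  qed
  have "(S j \<longlongrightarrow> S j t) (at_left t)"
    using continuous_on_interior[OF service_continuous[OF j], of t] \<open>0 < t\<close>
    by (simp add: continuous_at filterlim_at_split)
  then have "S j t \<le> L * c"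
    by (rule tendsto_upperbound) (use below t0 in \<open>auto simp: eventually_at_left_field\<close>)
  then show ?thesis by (simp add: c_def)
qed

text \<open>From its arrival on, a packet's user is backlogged and served at rate at least
  R phi j / (sum of all weights), so the packet is eventually completed.\<close>
lemma packet_eventually_served:
  assumes j: "j < K" and m: "m < n j"
  shows "\<exists>t\<ge>0. real (Suc m) * L \<le> S j t"
proof (rule ccontr)
  assume "\<not> ?thesis"
  then have unserved: "S j t < real (Suc m) * L" if "0 \<le> t" for t
    using that by force
  define t0 where "t0 = a j m"
  define c where "c = R * phi j / sum phi {..<K}"
  have "0 \<le> t0" using arrival_nonneg[OF j m] by (simp add: t0_def)
  have "0 < sum phi {..<K}" using j phi_pos by (intro sum_pos) auto
  then have "0 < c" using R_pos phi_pos[OF j] by (simp add: c_def)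
  have rate_ge: "c \<le> rate t j" if "t0 \<le> t" for t
  proof -
    have "{..m} \<subseteq> {i. i < n j \<and> a j i \<le> t}"
      using arrival_mono[OF j] m that by (auto simp: t0_def intro: order_trans)
    then have "card {..m} \<le> card {i. i < n j \<and> a j i \<le> t}"
      by (intro card_mono) auto
    then have "real (Suc m) * L \<le> cum_arr L n a j t"
      using L_pos by (simp add: cum_arr_def)
    with unserved[of t] that \<open>0 \<le> t0\<close> j have "j \<in> backlogged K L n a S t"
      by (simp add: backlogged_def)
    then show ?thesis unfolding c_def using phi_pos R_pos
      by (intro gps_rate_ge) (auto simp: backlogged_def)
  qed
  define t1 where "t1 = t0 + real (Suc m) * L / c"
  have "t0 \<le> t1" using \<open>0 < c\<close> L_pos by (simp add: t1_def)
  have "c * (t1 - t0) \<le> S j t1 - S j t0"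
    by (rule right_derivative_ge_imp_increment_ge[where f'="\<lambda>t. rate t j"])
       (use \<open>t0 \<le> t1\<close> \<open>0 \<le> t0\<close> j in \<open>auto intro: service_has_right_derivative rate_ge
          continuous_on_subset[OF service_continuous]\<close>)
  moreover have "c * (t1 - t0) = real (Suc m) * L" using \<open>0 < c\<close> by (simp add: t1_def)
  moreover have "0 \<le> S j t0" using service_nonneg[OF j \<open>0 \<le> t0\<close>] .
  ultimately show False using unserved[of t1] \<open>t0 \<le> t1\<close> \<open>0 \<le> t0\<close> by simp
qed

lemma gps_dep_served:
  assumes j: "j < K" and m: "m < n j"
  shows "0 \<le> gps_dep S L j m" and "real (Suc m) * L \<le> S j (gps_dep S L j m)"
proof -
  define Z where "Z = {t. 0 \<le> t \<and> real (Suc m) * L \<le> S j t}"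
  have "closed ({0..} \<inter> S j -` {real (Suc m) * L..})"
    by (rule continuous_closed_preimage[OF service_continuous[OF j]]) auto
  moreover have "Z = {0..} \<inter> S j -` {real (Suc m) * L..}" by (auto simp: Z_def)
  ultimately have "closed Z" by simp
  moreover have "Z \<noteq> {}" using packet_eventually_served[OF j m] by (auto simp: Z_def)
  moreover have "bdd_below Z" by (rule bdd_belowI[of _ 0]) (auto simp: Z_def)
  ultimately have "Inf Z \<in> Z" by (intro closed_contains_Inf)
  then show "0 \<le> gps_dep S L j m" and "real (Suc m) * L \<le> S j (gps_dep S L j m)"
    by (simp_all add: Z_def gps_dep_def)
qed

lemma arrival_le_gps_dep:
  assumes j: "j < K" and m: "m < n j"
  shows "a j m \<le> gps_dep S L j m"
proof (rule ccontr)
  assume "\<not> a j m \<le> gps_dep S L j m"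
  then have "S j (gps_dep S L j m) \<le> S j (a j m)"
    using gps_dep_served(1)[OF j m] by (intro service_mono[OF j]) auto
  also have "\<dots> \<le> L * card {m'. m' < n j \<and> a j m' < a j m}"
    using service_le_arrived_before[OF j arrival_nonneg[OF j m]] .
  also have "\<dots> \<le> L * m"
    using card_arrived_before_le[of n j a, OF arrival_mono[OF j]] L_pos by simp
  finally show False using gps_dep_served(2)[OF j m] L_pos by (simp add: algebra_simps)
qed

lemma service_increment_ge_card:
  assumes j: "j < K" and I: "I \<subseteq> {..<n j}" "I \<noteq> {}" and "0 \<le> t0"
    and window: "\<And>m. m \<in> I \<Longrightarrow> t0 \<le> a j m \<and> gps_dep S L j m \<le> T"
  shows "real (card I) * L \<le> S j T - S j t0"
proof -
  have "finite I" using I(1) finite_subset by blast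
  define m0 where "m0 = Min I"
  define m1 where "m1 = Max I"
  have m0: "m0 \<in> I" and m1: "m1 \<in> I"
    using \<open>finite I\<close> I(2) by (simp_all add: m0_def m1_def)
  have "I \<subseteq> {m0..m1}" using \<open>finite I\<close> by (auto simp: m0_def m1_def)
  then have "card I \<le> Suc m1 - m0" by (metis card_atLeastAtMost card_mono finite_atLeastAtMost)
  moreover have "m0 \<le> m1" using \<open>finite I\<close> m1 by (simp add: m0_def)
  ultimately have "real (card I) * L \<le> real (Suc m1) * L - real m0 * L"
    using L_pos by (simp add: of_nat_diff flip: left_diff_distrib)
  moreover have "S j t0 \<le> real m0 * L"
  proof -
    have "S j t0 \<le> L * card {m. m < n j \<and> a j m < t0}"
      by (rule service_le_arrived_before[OF j \<open>0 \<le> t0\<close>])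
    also have "\<dots> \<le> L * m0"
      using card_arrived_before_le[of n j a, OF arrival_mono[OF j]] window[OF m0] L_pos by simp
    finally show ?thesis by (simp add: mult.commute)
  qed
  moreover have "real (Suc m1) * L \<le> S j T"
  proof -
    have "m1 < n j" using I(1) m1 by auto
    then have "S j (gps_dep S L j m1) \<le> S j T"
      using window[OF m1] by (intro service_mono[OF j] gps_dep_served(1)[OF j]) auto
    with gps_dep_served(2)[OF j \<open>m1 < n j\<close>] show ?thesis by simp
  qed
  ultimately show ?thesis by simp
qed

text \<open>By FIFO, before t0 each user can only have been served for packets arriving before t0,
  so all bits of X are served within [t0, T], where the total service rate is at most R.\<close>
lemma work_in_window_le:
  assumes X: "X \<subseteq> packets K n" "X \<noteq> {}" and "0 \<le> t0"
    and window: "\<And>j m. (j, m) \<in> X \<Longrightarrow> t0 \<le> a j m \<and> gps_dep S L j m \<le> T"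
  shows "real (card X) * L \<le> R * (T - t0)"
proof -
  have X_packet: "j < K \<and> m < n j" if "(j, m) \<in> X" for j m
    using X(1) that by (auto simp: packets_def)
  have "finite X" using X(1) finite_packets finite_subset by blast
  obtain j0 m0 where "(j0, m0) \<in> X" using X(2) by auto
  then have "t0 \<le> a j0 m0" "a j0 m0 \<le> gps_dep S L j0 m0" "gps_dep S L j0 m0 \<le> T"
    using window X_packet arrival_le_gps_dep by auto
  then have "t0 \<le> T" by linarith
  define U where "U = fst ` X"
  define I where "I j = {m. (j, m) \<in> X}" for j
  have X_Sigma: "X = Sigma U I" by (force simp: U_def I_def)
  have "finite U" using \<open>finite X\<close> by (simp add: U_def)
  have "finite (I j)" for j
    using finite_imageI[OF \<open>finite X\<close>, of snd] by (rule finite_subset[rotated]) (force simp: I_def)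
  then have "card X = (\<Sum>j\<in>U. card (I j))"
    unfolding X_Sigma using \<open>finite U\<close> by (simp add: card_SigmaI)
  then have "real (card X) * L = (\<Sum>j\<in>U. real (card (I j)) * L)"
    by (simp add: sum_distrib_right)
  also have "\<dots> \<le> (\<Sum>j\<in>U. S j T - S j t0)"
  proof (rule sum_mono)
    fix j assume "j \<in> U"
    then obtain m where "(j, m) \<in> X" by (auto simp: U_def)
    show "real (card (I j)) * L \<le> S j T - S j t0"
    proof (rule service_increment_ge_card)
      show "j < K" using X_packet \<open>(j, m) \<in> X\<close> by blast
      show "I j \<subseteq> {..<n j}" "I j \<noteq> {}" using X_packet \<open>(j, m) \<in> X\<close> by (auto simp: I_def)
    qed (use window \<open>0 \<le> t0\<close> in \<open>auto simp: I_def\<close>)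
  qed
  also have "\<dots> \<le> R * (T - t0)"
    using X_packet \<open>0 \<le> t0\<close> \<open>t0 \<le> T\<close> by (intro sum_service_increment_le) (auto simp: U_def)
  finally show ?thesis .
qed

end

section \<open>MPGPS busy periods\<close>

locale mpgps_schedule =
  fixes K M N :: nat and r L :: real and n :: "nat \<Rightarrow> nat" and a :: "nat \<Rightarrow> nat \<Rightarrow> real"
    and gps :: "(nat \<Rightarrow> nat) \<Rightarrow> nat \<Rightarrow> real \<Rightarrow> real" and H :: nat
    and batch :: "nat \<Rightarrow> (nat \<times> nat) set" and tau :: "nat \<Rightarrow> real"
  assumes mpgps: "is_mpgps K M N r L n a gps H batch tau"
    and length_pos: "0 < L" and server_rate_pos: "0 < r"
begin

abbreviation arrival :: "nat \<times> nat \<Rightarrow> real" where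
  "arrival \<equiv> \<lambda>(j, m). a j m"

abbreviation served :: "nat \<Rightarrow> (nat \<times> nat) set" where
  "served g \<equiv> \<Union> (batch ` {1..<g})"

abbreviation finish :: "nat \<Rightarrow> real" where
  "finish \<equiv> mpgps_dep N r L batch tau"

lemma batch_subset_unserved: "g \<in> {1..H} \<Longrightarrow> batch g \<subseteq> packets K n - served g"
  using mpgps unfolding is_mpgps_def Let_def by blast

lemma batch_nonempty: "g \<in> {1..H} \<Longrightarrow> batch g \<noteq> {}"
  using mpgps unfolding is_mpgps_def Let_def by blast

lemma card_batch_le: "g \<in> {1..H} \<Longrightarrow> card (batch g) \<le> M"
  using mpgps unfolding is_mpgps_def Let_def by simp

lemma batches_disjoint: "g \<in> {1..H} \<Longrightarrow> g' \<in> {1..H} \<Longrightarrow> g \<noteq> g' \<Longrightarrow> batch g \<inter> batch g' = {}"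
  using mpgps unfolding is_mpgps_def Let_def by blast

lemma start_first: "packets K n \<noteq> {} \<Longrightarrow> tau 1 = Min (arrival ` packets K n)"
  using mpgps unfolding is_mpgps_def Let_def by blast

lemma start_Suc:
  "g \<in> {1..<H} \<Longrightarrow> tau (Suc g) = max (finish g) (Min (arrival ` (packets K n - served (Suc g))))"
  using mpgps unfolding is_mpgps_def Let_def by blast

lemma finite_batch: "g \<in> {1..H} \<Longrightarrow> finite (batch g)"
  using batch_subset_unserved finite_packets finite_subset by blast

lemma start_eq_Min_unserved:
  assumes g: "g \<in> {1..H}" and idle: "g = 1 \<or> tau g \<noteq> finish (g - 1)"
  shows "tau g = Min (arrival ` (packets K n - served g))"
proof (cases "g = 1")
  case True
  then have "packets K n \<noteq> {}" using batch_nonempty batch_subset_unserved g by blast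
  then show ?thesis using True start_first by simp
next
  case False
  with g have "g - 1 \<in> {1..<H}" "Suc (g - 1) = g" by auto
  with start_Suc[of "g - 1"] False idle show ?thesis by (metis max_def)
qed

lemma finish_busy_period:
  assumes "g0 \<le> h" and busy: "\<And>g. g0 < g \<Longrightarrow> g \<le> h \<Longrightarrow> tau g = finish (g - 1)"
  shows "finish h = tau g0 + (\<Sum>g=g0..h. real (card (batch g))) * L / (real N * r)"
  using \<open>g0 \<le> h\<close>
proof (induction h rule: dec_induct)
  case base
  then show ?case by (simp add: mpgps_dep_def)
next
  case (step g)
  have "finish (Suc g) = finish g + real (card (batch (Suc g))) * L / (real N * r)"
    using busy[of "Suc g"] step.hyps by (simp add: mpgps_dep_def)
  with step.IH step.hyps show ?case by (simp add: add_divide_distrib distrib_right)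
qed

lemma card_UN_batches:
  assumes "{g0..h} \<subseteq> {1..H}"
  shows "card (\<Union> (batch ` {g0..h})) = (\<Sum>g=g0..h. card (batch g))"
proof (rule card_UN_disjoint)
  show "\<forall>g\<in>{g0..h}. finite (batch g)" using assms finite_batch by blast
  show "\<forall>g\<in>{g0..h}. \<forall>g'\<in>{g0..h}. g \<noteq> g' \<longrightarrow> batch g \<inter> batch g' = {}"
    using assms batches_disjoint by blast
qed simp

text \<open>g0 is the last batch up to h that did not start right when its predecessor finished.\<close>
lemma busy_period:
  assumes h: "h \<in> {1..H}"
  obtains g0 where "g0 \<in> {1..h}" and "\<Union> (batch ` {g0..h}) \<subseteq> packets K n"
    and "finish h = tau g0 + real (card (\<Union> (batch ` {g0..h}))) * L / (real N * r)"
    and "\<And>p. p \<in> \<Union> (batch ` {g0..h}) \<Longrightarrow> tau g0 \<le> arrival p"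
    and "tau g0 \<in> arrival ` packets K n"
proof -
  define G where "G = {g \<in> {1..h}. g = 1 \<or> tau g \<noteq> finish (g - 1)}"
  define g0 where "g0 = Max G"
  have "finite G" "1 \<in> G" using h by (auto simp: G_def)
  then have "g0 \<in> G" unfolding g0_def by (intro Max_in) auto
  then have g0: "g0 \<in> {1..h}" "g0 = 1 \<or> tau g0 \<noteq> finish (g0 - 1)" by (auto simp: G_def)
  have busy: "tau g = finish (g - 1)" if "g0 < g" "g \<le> h" for g
  proof (rule ccontr)
    assume "tau g \<noteq> finish (g - 1)"
    with that g0 have "g \<in> G" by (auto simp: G_def)
    with \<open>finite G\<close> have "g \<le> g0" by (simp add: g0_def)
    with \<open>g0 < g\<close> show False by simp
  qed
  let ?W = "\<Union> (batch ` {g0..h})"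
  let ?U = "packets K n - served g0"
  have "batch g \<subseteq> ?U" if "g \<in> {g0..h}" for g
    using batch_subset_unserved[of g] that g0 h by auto
  then have W_unserved: "?W \<subseteq> ?U" by blast
  have "batch h \<noteq> {}" using batch_nonempty h by blast
  then have "?W \<noteq> {}" using g0 by auto
  have "finite (arrival ` ?U)" using finite_packets by blast
  have start: "tau g0 = Min (arrival ` ?U)"
    using start_eq_Min_unserved g0 h by auto
  show ?thesis
  proof (rule that)
    show "g0 \<in> {1..h}" using g0 by simp
    show "?W \<subseteq> packets K n" using W_unserved by blast
    show "finish h = tau g0 + real (card ?W) * L / (real N * r)"
      using finish_busy_period[OF _ busy] card_UN_batches[of g0 h] g0 h by simp
    show "tau g0 \<le> arrival p" if "p \<in> ?W" for p
      using start \<open>finite (arrival ` ?U)\<close> W_unserved that by auto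
    show "tau g0 \<in> arrival ` packets K n"
      using Min_in[OF \<open>finite (arrival ` ?U)\<close>] start \<open>?W \<noteq> {}\<close> W_unserved by auto
  qed
qed

text \<open>X consists of p and the packets of the busy period sent in earlier batches.\<close>
lemma ordered_busy_period:
  fixes d :: "nat \<times> nat \<Rightarrow> real"
  assumes h: "h \<in> {1..H}" and p: "p \<in> batch h"
    and ordered: "\<forall>g\<in>{1..H}. \<forall>g'\<in>{1..H}. g < g' \<longrightarrow> (\<forall>q\<in>batch g. \<forall>q'\<in>batch g'. d q \<le> d q')"
  obtains t0 X where "t0 \<in> arrival ` packets K n" and "X \<subseteq> packets K n" and "p \<in> X"
    and "\<And>q. q \<in> X \<Longrightarrow> t0 \<le> arrival q \<and> d q \<le> d p"
    and "finish h \<le> t0 + real (card X) * L / (real N * r) + (real M - 1) * L / (real N * r)"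
proof -
  obtain g0 where g0: "g0 \<in> {1..h}" and W_packets: "\<Union> (batch ` {g0..h}) \<subseteq> packets K n"
    and finish: "finish h = tau g0 + real (card (\<Union> (batch ` {g0..h}))) * L / (real N * r)"
    and arrived: "\<And>q. q \<in> \<Union> (batch ` {g0..h}) \<Longrightarrow> tau g0 \<le> arrival q"
    and "tau g0 \<in> arrival ` packets K n"
    using busy_period[OF h] by blast
  define W where "W = \<Union> (batch ` {g0..h})"
  define X where "X = W - (batch h - {p})"
  have "batch h \<subseteq> W" using g0 by (auto simp: W_def)
  have "finite W" using W_packets finite_packets unfolding W_def by (rule finite_subset)
  have "real (card W) = real (card X) + real (card (batch h)) - 1"
    using card_Diff_Diff_singleton[OF \<open>finite W\<close> \<open>batch h \<subseteq> W\<close> p] by (simp add: X_def)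
  also have "\<dots> \<le> real (card X) + real M - 1"
    using card_batch_le[OF h] by simp
  finally have "finish h \<le> tau g0 + (real (card X) + real M - 1) * L / (real N * r)"
    using finish length_pos server_rate_pos by (simp add: W_def divide_right_mono)
  show ?thesis
  proof (rule that)
    show "tau g0 \<in> arrival ` packets K n" by fact
    show "X \<subseteq> packets K n" "p \<in> X"
      using W_packets \<open>batch h \<subseteq> W\<close> p by (auto simp: X_def W_def)
    show "finish h \<le> tau g0 + real (card X) * L / (real N * r) + (real M - 1) * L / (real N * r)"
      using \<open>finish h \<le> _\<close> by (simp only: add_diff_eq[symmetric] distrib_right add_divide_distrib add.assoc)
    fix q assume "q \<in> X"
    then obtain g where g: "g \<in> {g0..h}" "q \<in> batch g" "g = h \<longrightarrow> q = p"
      unfolding X_def W_def by blast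
    then have "tau g0 \<le> arrival q" using arrived by blast
    moreover have "d q \<le> d p"
    proof (cases "g = h")
      case False
      with g g0 h have "g \<in> {1..H}" "g < h" by auto
      with ordered h g(2) p show ?thesis by blast
    qed (use g in simp)
    ultimately show "tau g0 \<le> arrival q \<and> d q \<le> d p" ..
  qed
qed

end

theorem theorem2:
  fixes K M N H :: nat and r L :: real and phi :: "nat \<Rightarrow> real"
    and n :: "nat \<Rightarrow> nat" and a :: "nat \<Rightarrow> nat \<Rightarrow> real"
    and gps :: "(nat \<Rightarrow> nat) \<Rightarrow> nat \<Rightarrow> real \<Rightarrow> real"
    and batch :: "nat \<Rightarrow> (nat \<times> nat) set" and tau :: "nat \<Rightarrow> real"
    and h k i :: nat
  assumes "M \<ge> 1" and "N \<ge> 1" and "r > 0" and "L > 0"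
    and "\<forall>j<K. phi j > 0"
    and "\<forall>j<K. \<forall>m<n j. 0 \<le> a j m"
    and "\<forall>j<K. \<forall>m m'. m \<le> m' \<and> m' < n j \<longrightarrow> a j m \<le> a j m'"
    and "\<forall>n'. (\<forall>j. n' j \<le> n j) \<longrightarrow> is_gps K phi (real N * r) L n' a (gps n')"
    and "is_mpgps K M N r L n a gps H batch tau"
    and "\<forall>g\<in>{1..H}. \<forall>g'\<in>{1..H}. g < g' \<longrightarrow>
           (\<forall>(j, m)\<in>batch g. \<forall>(j', m')\<in>batch g'.
              gps_dep (gps n) L j m \<le> gps_dep (gps n) L j' m')"
    and "h \<in> {1..H}" and "(k, i) \<in> batch h"
  shows "mpgps_dep N r L batch tau h - gps_dep (gps n) L k i \<le> (real M - 1) * L / (real N * r)"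
proof -
  interpret gps_system K phi "real N * r" L n a "gps n"
    using assms(2-8) by unfold_locales auto
  interpret mpgps_schedule K M N r L n a gps H batch tau
    using assms(3,4,9) by unfold_locales
  let ?R = "real N * r" and ?d = "\<lambda>(j, m). gps_dep (gps n) L j m"
  obtain t0 X where t0: "t0 \<in> arrival ` packets K n" and X: "X \<subseteq> packets K n" "(k, i) \<in> X"
    and window: "\<And>q. q \<in> X \<Longrightarrow> t0 \<le> arrival q \<and> ?d q \<le> ?d (k, i)"
    and finish: "finish h \<le> t0 + real (card X) * L / ?R + (real M - 1) * L / ?R"
    using ordered_busy_period[OF assms(11,12), of ?d] assms(10) by (auto simp: split_beta)
  have "0 \<le> t0" using t0 arrival_nonneg by (auto simp: packets_def)
  have "real (card X) * L \<le> ?R * (gps_dep (gps n) L k i - t0)"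
    using X \<open>0 \<le> t0\<close> window by (intro work_in_window_le) auto
  then have "real (card X) * L / ?R \<le> gps_dep (gps n) L k i - t0"
    using R_pos by (simp add: pos_divide_le_eq mult.commute)
  with finish show ?thesis by simp
qed

end
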